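(* Assume that for every $t$ the local noises $w^1_t,\ldots,w^n_t$ are exchangeable. For any realization $x_{1:t},y_{1:t},a_{1:t}$, $t\in\mathbb{N}$, and irrespective of the strategy $g$, $$\mathbb{E}\big[c(m_t,\hat m_t,a_t)\mid x_{1:t},y_{1:t},a_{1:t}\big]=\hat c(x_t,y_t,a_t):=\sum_{m\in\mathcal{M}(n)}c\big(m,h(T_{\mathsf m}^{y_t}(\cdot,x_t)),a_t\big)\,T_{\mathsf m}^{y_t}(m,x_t).$$
   Context: Setting: $n$ nodes with states $s^i_t$ in a finite set $\mathcal{S}\subset\mathbb{R}$, time $t\in\mathbb{N}$; empirical distribution $m_t(s)=\frac1n\sum_i\mathbb{1}\{s^i_t=s\}\in\mathcal{M}(n)$ (probability vectors on $\mathcal{S}$ with entries in $\{0,\frac1n,\ldots,1\}$); dynamics $s^i_{t+1}=f(s^i_t,m_t,w^i_t)$ with local noise $w^i_t$ in a finite set $\mathcal{W}$. Action $a_t\in\{0,1\}$. Observations $o_t\in\mathcal{M}(n)\cup\{\mathtt{blank}\}$: $o_1=m_1$; if $a_t=0$ then $o_{t+1}=\mathtt{blank}$; if $a_t=1$ then $o_{t+1}=m_{t+1}$ with probability $q\in[0,1]$, else $\mathtt{blank}$. Strategy $a_t=g_t(o_{1:t},a_{1:t-1})$. Primitive random variables are mutually independent. Estimate $\hat m_t=h(\mathbb{P}(m_t\mid o_{1:t},a_{1:t-1}))\in\mathcal{M}(n)$ for a fixed function $h$ on probability distributions over $\mathcal{M}(n)$. Per-step cost $c:\mathcal{M}(n)^2\times\{0,1\}\to\mathbb{R}_{\ge0}$.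 $T_{\mathsf m}(m',m)=\mathbb{P}(m_{t+1}=m'\mid m_t=m)$ is the transition matrix of the Markov chain $m_t$, $T_{\mathsf m}^y$ its $y$-th power. $x_t$ is the last non-blank observation up to $t$ and $y_t$ the number of blanks since, $(x_1,y_1)=(m_1,0)$. *)

theory Defs
  imports "HOL-Probability.Probability"
begin

definition emp :: "nat \<Rightarrow> (nat \<Rightarrow> real) \<Rightarrow> (real \<Rightarrow> real)" where
  "emp n s = (\<lambda>x. real (card {i. i < n \<and> s i = x}) / real n)"

definition Mset :: "nat \<Rightarrow> real set \<Rightarrow> (real \<Rightarrow> real) set" where
  "Mset n S = {m. (\<forall>x. x \<notin> S \<longrightarrow> m x = 0) \<and> (\<forall>x. \<exists>k\<le>n. m x = real k / real n)
                  \<and> (\<Sum>x\<in>S. m x) = 1}"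

text \<open>Outcomes of the primitive random variables:
  (initial states s_1, noise vectors w_tau (tau = 1,2,...), observation coins b_tau (tau = 2,3,...)).
  Observations: None = blank, Some m = m.\<close>
type_synonym ('w) outcome = "(nat \<Rightarrow> real) \<times> (nat \<Rightarrow> nat \<Rightarrow> 'w) \<times> (nat \<Rightarrow> bool)"

text \<open>Joint state vector at time tau (tau \<ge> 1; index 0 is a dummy equal to time 1).\<close>
primrec st :: "(real \<Rightarrow> (real \<Rightarrow> real) \<Rightarrow> 'w \<Rightarrow> real) \<Rightarrow> nat \<Rightarrow> 'w outcome \<Rightarrow> nat \<Rightarrow> (nat \<Rightarrow> real)" where
  "st f n \<omega> 0 = fst \<omega>"
| "st f n \<omega> (Suc k) = (if k = 0 then fst \<omega>
      else (\<lambda>i. f (st f n \<omega> k i) (emp n (st f n \<omega> k)) (fst (snd \<omega>) k i)))"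

definition mproc :: "(real \<Rightarrow> (real \<Rightarrow> real) \<Rightarrow> 'w \<Rightarrow> real) \<Rightarrow> nat \<Rightarrow> 'w outcome \<Rightarrow> nat \<Rightarrow> (real \<Rightarrow> real)" where
  "mproc f n \<omega> tau = emp n (st f n \<omega> tau)"

text \<open>hist ... tau = (o_{1:tau}, a_{1:tau}) under strategy g, where a_tau = g tau o_{1:tau} a_{1:tau-1}.\<close>
primrec hist :: "(real \<Rightarrow> (real \<Rightarrow> real) \<Rightarrow> 'w \<Rightarrow> real) \<Rightarrow> nat
    \<Rightarrow> (nat \<Rightarrow> (real \<Rightarrow> real) option list \<Rightarrow> bool list \<Rightarrow> bool)
    \<Rightarrow> 'w outcome \<Rightarrow> nat \<Rightarrow> (real \<Rightarrow> real) option list \<times> bool list" where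
  "hist f n g \<omega> 0 = ([], [])"
| "hist f n g \<omega> (Suc k) =
    (let os = fst (hist f n g \<omega> k); as = snd (hist f n g \<omega> k);
         ob = (if k = 0 then Some (mproc f n \<omega> 1)
              else if last as \<and> snd (snd \<omega>) (Suc k) then Some (mproc f n \<omega> (Suc k)) else None)
     in (os @ [ob], as @ [g (Suc k) (os @ [ob]) as]))"

text \<open>(x_tau, y_tau): last non-blank observation and number of blanks since.\<close>
fun xystep :: "(real \<Rightarrow> real) \<times> nat \<Rightarrow> (real \<Rightarrow> real) option \<Rightarrow> (real \<Rightarrow> real) \<times> nat" where
  "xystep (x, y) None = (x, Suc y)"
| "xystep (x, y) (Some m) = (m, 0)"

definition xyseq :: "(real \<Rightarrow> real) option list \<Rightarrow> ((real \<Rightarrow> real) \<times> nat) list" where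
  "xyseq os = map (\<lambda>k. fold (\<lambda>ob p. xystep p ob) (take k os) (undefined, 0)) [1..<Suc (length os)]"

definition law :: "(nat \<Rightarrow> real) pmf \<Rightarrow> (nat \<Rightarrow> 'w) pmf \<Rightarrow> real \<Rightarrow> nat \<Rightarrow> 'w outcome pmf" where
  "law P0 W q N = pair_pmf P0 (pair_pmf (Pi_pmf {..<N} undefined (\<lambda>_. W))
                                        (Pi_pmf {..<N} False (\<lambda>_. bernoulli_pmf q)))"

definition cprob :: "'a pmf \<Rightarrow> ('a \<Rightarrow> 'b) \<Rightarrow> ('a \<Rightarrow> 'c) \<Rightarrow> 'a \<Rightarrow> 'b \<Rightarrow> real" where
  "cprob \<Omega> X Y \<omega> v = measure_pmf.prob \<Omega> {\<omega>'. X \<omega>' = v \<and> Y \<omega>' = Y \<omega>}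
                      / measure_pmf.prob \<Omega> {\<omega>'. Y \<omega>' = Y \<omega>}"

definition mhat where
  "mhat \<Omega> f n g h \<omega> t = h (cprob \<Omega> (\<lambda>\<omega>'. mproc f n \<omega>' t)
      (\<lambda>\<omega>'. (fst (hist f n g \<omega>' t), butlast (snd (hist f n g \<omega>' t)))) \<omega>)"

text \<open>y-th power of a transition matrix T (T m' m = probability of m \<rightarrow> m') over the finite state set M.\<close>
fun tpow :: "((real \<Rightarrow> real) \<Rightarrow> (real \<Rightarrow> real) \<Rightarrow> real) \<Rightarrow> (real \<Rightarrow> real) set \<Rightarrow> nat
    \<Rightarrow> (real \<Rightarrow> real) \<Rightarrow> (real \<Rightarrow> real) \<Rightarrow> real" where
  "tpow T M 0 m' m = (if m' = m then 1 else 0)"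
| "tpow T M (Suc y) m' m = (\<Sum>z\<in>M. T m' z * tpow T M y z m)"

definition chat where
  "chat c h T M x y a = (\<Sum>m\<in>M. c m (h (\<lambda>m'. tpow T M y m' x)) a * tpow T M y m x)"

end

theory Submission
  imports Defs
begin

(* Resampling the noise vector w_k leaves the law of the primitive variables unchanged, and by
   exchangeability the law of the next empirical distribution given the state vector depends on
   that vector only through m_k. Hence, on any event determined by the history up to time k and
   the later observation coins (an event that does not see w_k), m_{k+1} is drawn from T(., m_k).
   If such an event forces (x_k, y_k) = (x, y), then P(m_k = v, event) = T^y(v, x) P(event), by
   induction on y: for y = 0 the value m_k = x has just been observed, and if o_k is blank the
   event is an event of the same kind at time k - 1 forcing (x, y - 1), to which one Markov step
   adds a factor T. Applied to the events {o_{1:t}, a_{1:t-1}} and {x_{1:t}, y_{1:t}, a_{1:t}},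
   this shows that the estimate hat m_t and the conditional law of m_t are both functions of
   (x_t, y_t), which gives the formula for the expected cost. *)

lemma measure_pmf_prob_bind:
  "measure_pmf.prob (bind_pmf M N) A = (\<integral>x. measure_pmf.prob (N x) A \<partial>M)"
proof -
  have "emeasure (measure_pmf (bind_pmf M N)) A = (\<integral>\<^sup>+x. ennreal (measure_pmf.prob (N x) A) \<partial>M)"
    by (subst emeasure_bind_pmf) (simp add: measure_pmf.emeasure_eq_measure)
  also have "\<dots> = ennreal (\<integral>x. measure_pmf.prob (N x) A \<partial>M)"
    by (rule nn_integral_eq_integral) (auto intro!: measure_pmf.integrable_const_bound[where B=1])
  finally show ?thesis
    by (simp add: measure_pmf.emeasure_eq_measure)
qed

lemma Pi_pmf_resample_component:
  assumes "finite I" "i \<in> I"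
  shows "bind_pmf (Pi_pmf I d p) (\<lambda>f. map_pmf (\<lambda>y. f(i := y)) (p i)) = Pi_pmf I d p"
proof -
  have "Pi_pmf I d p = do {y \<leftarrow> p i; f \<leftarrow> Pi_pmf (I - {i}) d p; return_pmf (f(i := y))}"
    using Pi_pmf_insert'[of "I - {i}" i d p] assms by (simp add: insert_absorb)
  then show ?thesis
    by (simp add: map_pmf_def bind_assoc_pmf bind_return_pmf)
      (subst bind_commute_pmf, simp add: bind_assoc_pmf bind_return_pmf)
qed

lemma measure_pmf_prob_sum_fibres:
  assumes "finite M" "\<And>\<omega>. \<omega> \<in> set_pmf p \<Longrightarrow> F \<omega> \<in> M"
  shows "measure_pmf.prob p A = (\<Sum>z\<in>M. measure_pmf.prob p {\<omega>\<in>A. F \<omega> = z})"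
proof -
  have "measure_pmf.prob p A = measure_pmf.prob p (\<Union>z\<in>M. {\<omega>\<in>A. F \<omega> = z} \<inter> set_pmf p)"
    using assms(2) by (subst measure_Int_set_pmf[symmetric]) (rule arg_cong[where f="measure p"], auto)
  also have "\<dots> = (\<Sum>z\<in>M. measure_pmf.prob p ({\<omega>\<in>A. F \<omega> = z} \<inter> set_pmf p))"
    by (rule measure_pmf.finite_measure_finite_Union) (auto simp: assms(1) disjoint_family_on_def)
  finally show ?thesis
    by (simp add: measure_Int_set_pmf)
qed

lemma measure_cond_pmf:
  assumes "set_pmf p \<inter> E \<noteq> {}"
  shows "measure_pmf.prob (cond_pmf p E) A = measure_pmf.prob p (E \<inter> A) / measure_pmf.prob p E"
proof -
  have "emeasure (measure_pmf p) E \<noteq> 0"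
    using assms by (simp add: measure_pmf.emeasure_eq_measure measure_pmf_zero_iff)
  then show ?thesis
    by (simp add: cond_pmf.rep_eq[OF assms] measure_pmf.emeasure_eq_measure)
qed

lemma expectation_cond_pmf_finite_range:
  fixes \<phi> :: "'b \<Rightarrow> real"
  assumes "finite M" "\<And>\<omega>. \<omega> \<in> set_pmf p \<Longrightarrow> X \<omega> \<in> M" "set_pmf p \<inter> E \<noteq> {}"
  shows "measure_pmf.expectation (cond_pmf p E) (\<lambda>\<omega>. \<phi> (X \<omega>))
       = (\<Sum>m\<in>M. \<phi> m * (measure_pmf.prob p {\<omega>\<in>E. X \<omega> = m} / measure_pmf.prob p E))"
proof -
  have "measure_pmf.expectation (cond_pmf p E) (\<lambda>\<omega>. \<phi> (X \<omega>))
      = measure_pmf.expectation (map_pmf X (cond_pmf p E)) \<phi>"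
    by simp
  also have "\<dots> = (\<Sum>m\<in>M. \<phi> m * pmf (map_pmf X (cond_pmf p E)) m)"
    using assms by (intro integral_measure_pmf_real) auto
  also have "\<dots> = (\<Sum>m\<in>M. \<phi> m * (measure_pmf.prob p {\<omega>\<in>E. X \<omega> = m} / measure_pmf.prob p E))"
    using measure_cond_pmf[OF assms(3)] by (simp add: pmf_map vimage_def Int_def)
  finally show ?thesis .
qed

lemma emp_comp_permutes:
  assumes "\<pi> permutes {..<n}"
  shows "emp n (u \<circ> \<pi>) = emp n u"
proof -
  have "{i. i < n \<and> u (\<pi> i) = x} = \<pi> -` {i. i < n \<and> u i = x}" for x
    using permutes_in_image[OF assms] by auto
  then have "card {i. i < n \<and> u (\<pi> i) = x} = card {i. i < n \<and> u i = x}" for x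
    using card_vimage_inj[OF permutes_inj[OF assms]] permutes_surj[OF assms] by (metis top_greatest)
  then show ?thesis
    by (simp add: emp_def)
qed

lemma emp_cong: "(\<And>i. i < n \<Longrightarrow> u i = u' i) \<Longrightarrow> emp n u = emp n u'"
  unfolding emp_def by (intro ext arg_cong[where f="\<lambda>k. real k / real n"] arg_cong[where f=card]) auto

lemma count_mset_map_upt: "count (mset (map s [0..<n])) x = card {i. i < n \<and> s i = x}"
proof -
  have "count (mset (map s [0..<n])) x = card {i. i < length (map s [0..<n]) \<and> x = map s [0..<n] ! i}"
    by (simp only: count_mset count_list_eq_length_filter length_filter_conv_card)
  also have "{i. i < length (map s [0..<n]) \<and> x = map s [0..<n] ! i} = {i. i < n \<and> s i = x}"
    by auto
  finally show ?thesis .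
qed

lemma emp_eq_imp_permutes:
  assumes "n \<ge> 1" "emp n s = emp n s'"
  obtains \<pi> where "\<pi> permutes {..<n}" "\<And>i. i < n \<Longrightarrow> s' i = s (\<pi> i)"
proof -
  have "card {i. i < n \<and> s i = x} = card {i. i < n \<and> s' i = x}" for x
    using fun_cong[OF assms(2), of x] assms(1) by (simp add: emp_def)
  then have "mset (map s' [0..<n]) = mset (map s [0..<n])"
    by (intro multiset_eqI) (simp only: count_mset_map_upt)
  then obtain \<pi> where \<pi>: "\<pi> permutes {..<length (map s [0..<n])}"
      and perm: "permute_list \<pi> (map s [0..<n]) = map s' [0..<n]"
    by (rule mset_eq_permutation)
  have "s' i = s (\<pi> i)" if "i < n" for i
  proof -
    have "s' i = permute_list \<pi> (map s [0..<n]) ! i"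
      using that perm by simp
    also have "\<dots> = s (\<pi> i)"
      using that \<pi> permutes_in_image[OF \<pi>, of i] by (simp add: permute_list_nth)
    finally show ?thesis .
  qed
  with \<pi> show ?thesis
    using that by simp
qed

lemma finite_Mset: "finite S \<Longrightarrow> finite (Mset n S)"
proof -
  assume S: "finite S"
  let ?V = "(\<lambda>k. real k / real n) ` {..n}"
  have "Mset n S \<subseteq> {m. \<forall>x. (x \<in> S \<longrightarrow> m x \<in> ?V) \<and> (x \<notin> S \<longrightarrow> m x = 0)}"
    unfolding Mset_def by auto
  moreover have "finite {m. \<forall>x. (x \<in> S \<longrightarrow> m x \<in> ?V) \<and> (x \<notin> S \<longrightarrow> m x = 0)}"
    by (rule finite_set_of_finite_funs) (use S in auto)
  ultimately show ?thesis
    by (rule finite_subset)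
qed

lemma emp_in_Mset:
  assumes "n \<ge> 1" "finite S" "\<And>i. i < n \<Longrightarrow> s i \<in> S"
  shows "emp n s \<in> Mset n S"
proof -
  have "\<exists>k\<le>n. emp n s x = real k / real n" for x
    using card_mono[of "{..<n}" "{i. i < n \<and> s i = x}"] by (auto simp: emp_def)
  moreover have "(\<Sum>x\<in>S. card {i. i < n \<and> s i = x}) = n"
  proof -
    have "(\<Sum>x\<in>S. card {i. i < n \<and> s i = x}) = card (\<Union>x\<in>S. {i. i < n \<and> s i = x})"
      by (rule card_UN_disjoint[symmetric]) (auto simp: assms(2))
    also have "(\<Union>x\<in>S. {i. i < n \<and> s i = x}) = {..<n}"
      using assms(3) by auto
    finally show ?thesis
      by simp
  qed
  then have "(\<Sum>x\<in>S. emp n s x) = 1"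
    using assms(1) by (simp add: emp_def sum_divide_distrib[symmetric] flip: of_nat_sum)
  moreover have "emp n s x = 0" if "x \<notin> S" for x
    using that assms(3) by (auto simp: emp_def)
  ultimately show ?thesis
    unfolding Mset_def by blast
qed

definition next_emp_prob :: "(real \<Rightarrow> (real \<Rightarrow> real) \<Rightarrow> 'w \<Rightarrow> real) \<Rightarrow> nat \<Rightarrow> (nat \<Rightarrow> 'w) pmf
    \<Rightarrow> (real \<Rightarrow> real) \<Rightarrow> (nat \<Rightarrow> real) \<Rightarrow> real" where
  "next_emp_prob f n W v s = measure_pmf.prob W {w. emp n (\<lambda>i. f (s i) (emp n s) (w i)) = v}"

lemma next_emp_prob_emp_cong:
  assumes "n \<ge> 1" "\<forall>\<sigma>. \<sigma> permutes {..<n} \<longrightarrow> map_pmf (\<lambda>w. w \<circ> \<sigma>) W = W"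
    and "emp n s = emp n s'"
  shows "next_emp_prob f n W v s = next_emp_prob f n W v s'"
proof -
  obtain \<pi> where \<pi>: "\<pi> permutes {..<n}" and s': "\<And>i. i < n \<Longrightarrow> s' i = s (\<pi> i)"
    using emp_eq_imp_permutes[OF assms(1,3)] by blast
  have "emp n (\<lambda>i. f (s i) (emp n s) (w (inv \<pi> i))) = emp n (\<lambda>i. f (s' i) (emp n s') (w i))" for w
  proof -
    have "emp n (\<lambda>i. f (s i) (emp n s) (w (inv \<pi> i)))
        = emp n ((\<lambda>i. f (s i) (emp n s) (w (inv \<pi> i))) \<circ> \<pi>)"
      using emp_comp_permutes[OF \<pi>] by simp
    also have "\<dots> = emp n (\<lambda>i. f (s' i) (emp n s') (w i))"
      using s' assms(3) permutes_inverses(2)[OF \<pi>] by (intro emp_cong) simp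
    finally show ?thesis .
  qed
  moreover have "map_pmf (\<lambda>w. w \<circ> inv \<pi>) W = W"
    using assms(2) permutes_inv[OF \<pi>] by blast
  then have "next_emp_prob f n W v s = measure_pmf.prob (map_pmf (\<lambda>w. w \<circ> inv \<pi>) W)
      {w. emp n (\<lambda>i. f (s i) (emp n s) (w i)) = v}"
    by (simp add: next_emp_prob_def)
  ultimately show ?thesis
    by (simp add: next_emp_prob_def vimage_def)
qed

text \<open>The law of m_{k+1} given a state vector at time k with empirical distribution z;
  by next_emp_prob_emp_cong it does not matter which such vector SOME picks.\<close>
definition emp_kernel :: "(real \<Rightarrow> (real \<Rightarrow> real) \<Rightarrow> 'w \<Rightarrow> real) \<Rightarrow> nat \<Rightarrow> (nat \<Rightarrow> 'w) pmf
    \<Rightarrow> (real \<Rightarrow> real) \<Rightarrow> (real \<Rightarrow> real) \<Rightarrow> real" where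
  "emp_kernel f n W v z = next_emp_prob f n W v (SOME s. emp n s = z)"

definition upd_noise :: "'w outcome \<Rightarrow> nat \<Rightarrow> (nat \<Rightarrow> 'w) \<Rightarrow> 'w outcome" where
  "upd_noise \<omega> k w = (fst \<omega>, (fst (snd \<omega>))(k := w), snd (snd \<omega>))"

lemma law_resample_noise:
  assumes "k < N"
  shows "bind_pmf (law P0 W q N) (\<lambda>\<omega>. map_pmf (upd_noise \<omega> k) W) = law P0 W q N"
proof -
  have "law P0 W q N = pair_pmf P0 (pair_pmf
      (bind_pmf (Pi_pmf {..<N} undefined (\<lambda>_. W)) (\<lambda>ws. map_pmf (\<lambda>w. ws(k := w)) W))
      (Pi_pmf {..<N} False (\<lambda>_. bernoulli_pmf q)))"
    unfolding law_def using Pi_pmf_resample_component[of "{..<N}" k undefined "\<lambda>_. W"] assms by simp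
  also have "\<dots> = bind_pmf (law P0 W q N) (\<lambda>\<omega>. map_pmf (upd_noise \<omega> k) W)"
    unfolding law_def pair_pmf_def upd_noise_def map_pmf_def
    by (simp add: bind_assoc_pmf bind_return_pmf) (intro bind_pmf_cong refl bind_commute_pmf)
  finally show ?thesis ..
qed

lemma st_upd_noise: "j \<le> k \<Longrightarrow> st f n (upd_noise \<omega> k w) j = st f n \<omega> j"
  by (induction j) (auto simp: upd_noise_def)

lemma st_Suc_upd_noise:
  "1 \<le> k \<Longrightarrow> st f n (upd_noise \<omega> k w) (Suc k) = (\<lambda>i. f (st f n \<omega> k i) (emp n (st f n \<omega> k)) (w i))"
  using st_upd_noise[of k k f n \<omega> w] by (auto simp: upd_noise_def)

lemma mproc_upd_noise: "j \<le> k \<Longrightarrow> mproc f n (upd_noise \<omega> k w) j = mproc f n \<omega> j"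
  by (simp add: mproc_def st_upd_noise)

lemma hist_upd_noise: "j \<le> k \<Longrightarrow> hist f n g (upd_noise \<omega> k w) j = hist f n g \<omega> j"
proof (induction j)
  case (Suc j)
  have "snd (snd (upd_noise \<omega> k w)) = snd (snd \<omega>)"
    by (simp add: upd_noise_def)
  with Suc show ?case
    by (simp add: Let_def mproc_upd_noise)
qed simp

text \<open>Resampling w_k does not change the law nor the event A, and turns m_{k+1} into a fresh
  draw given the state vector at time k.\<close>
lemma prob_mproc_Suc_inter_eq_emp_kernel:
  assumes "n \<ge> 1" "\<forall>\<sigma>. \<sigma> permutes {..<n} \<longrightarrow> map_pmf (\<lambda>w. w \<circ> \<sigma>) W = W"
    and "1 \<le> k" "k < N"
    and A_indep: "\<And>\<omega> w. upd_noise \<omega> k w \<in> A \<longleftrightarrow> \<omega> \<in> A"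
    and A_mproc: "\<And>\<omega>. \<omega> \<in> A \<Longrightarrow> mproc f n \<omega> k = z"
  shows "measure_pmf.prob (law P0 W q N) {\<omega>. mproc f n \<omega> (Suc k) = v \<and> \<omega> \<in> A}
       = emp_kernel f n W v z * measure_pmf.prob (law P0 W q N) A"
proof -
  let ?\<Omega> = "law P0 W q N"
  let ?B = "{\<omega>. mproc f n \<omega> (Suc k) = v \<and> \<omega> \<in> A}"
  have "measure_pmf.prob W (upd_noise \<omega> k -` ?B) = indicator A \<omega> * emp_kernel f n W v z" for \<omega>
  proof (cases "\<omega> \<in> A")
    case True
    have "mproc f n (upd_noise \<omega> k w) (Suc k)
        = emp n (\<lambda>i. f (st f n \<omega> k i) (emp n (st f n \<omega> k)) (w i))" for w
      unfolding mproc_def by (simp only: st_Suc_upd_noise[OF assms(3)])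
    then have "upd_noise \<omega> k -` ?B = {w. emp n (\<lambda>i. f (st f n \<omega> k i) (emp n (st f n \<omega> k)) (w i)) = v}"
      using True A_indep by auto
    then have "measure_pmf.prob W (upd_noise \<omega> k -` ?B) = next_emp_prob f n W v (st f n \<omega> k)"
      by (simp add: next_emp_prob_def)
    also have "\<dots> = emp_kernel f n W v z"
      unfolding emp_kernel_def using A_mproc[OF True] someI[of "\<lambda>s. emp n s = z" "st f n \<omega> k"]
      by (intro next_emp_prob_emp_cong assms(1,2)) (simp add: mproc_def)
    finally show ?thesis
      using True by simp
  next
    case False
    then have empty: "upd_noise \<omega> k -` ?B = {}"
      using A_indep by auto
    show ?thesis
      using False by (simp only: empty) simp
  qed
  then have "measure_pmf.prob (bind_pmf ?\<Omega> (\<lambda>\<omega>. map_pmf (upd_noise \<omega> k) W)) ?B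
      = (\<integral>\<omega>. indicator A \<omega> * emp_kernel f n W v z \<partial>?\<Omega>)"
    by (simp add: measure_pmf_prob_bind)
  then show ?thesis
    by (simp add: law_resample_noise[OF assms(4)])
qed

definition hist_step :: "(nat \<Rightarrow> (real \<Rightarrow> real) option list \<Rightarrow> bool list \<Rightarrow> bool) \<Rightarrow> nat
    \<Rightarrow> (real \<Rightarrow> real) option list \<times> bool list \<Rightarrow> (real \<Rightarrow> real) option
    \<Rightarrow> (real \<Rightarrow> real) option list \<times> bool list" where
  "hist_step g k H ob = (fst H @ [ob], snd H @ [g (Suc k) (fst H @ [ob]) (snd H)])"

text \<open>Whether o_{k+1} is non-blank.\<close>
definition observed :: "(real \<Rightarrow> (real \<Rightarrow> real) \<Rightarrow> 'w \<Rightarrow> real) \<Rightarrow> nat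
    \<Rightarrow> (nat \<Rightarrow> (real \<Rightarrow> real) option list \<Rightarrow> bool list \<Rightarrow> bool) \<Rightarrow> 'w outcome \<Rightarrow> nat \<Rightarrow> bool" where
  "observed f n g \<omega> k \<longleftrightarrow> k = 0 \<or> last (snd (hist f n g \<omega> k)) \<and> snd (snd \<omega>) (Suc k)"

lemma hist_Suc:
  "hist f n g \<omega> (Suc k) = hist_step g k (hist f n g \<omega> k)
     (if observed f n g \<omega> k then Some (mproc f n \<omega> (Suc k)) else None)"
  by (simp add: hist_step_def observed_def Let_def)

declare hist.simps(2) [simp del]

lemma length_hist: "length (fst (hist f n g \<omega> k)) = k"
  by (induction k) (simp_all add: hist_Suc hist_step_def)

definition xy_of :: "(real \<Rightarrow> real) option list \<Rightarrow> (real \<Rightarrow> real) \<times> nat" where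
  "xy_of os = fold (\<lambda>ob p. xystep p ob) os (undefined, 0)"

lemma length_xyseq: "length (xyseq os) = length os"
  by (auto simp: xyseq_def Suc_le_eq)

lemma last_xyseq: "os \<noteq> [] \<Longrightarrow> last (xyseq os) = xy_of os"
  by (cases os rule: rev_cases) (simp_all add: xyseq_def xy_of_def)

lemma xy_of_hist_Suc:
  "xy_of (fst (hist f n g \<omega> (Suc k))) =
    (if observed f n g \<omega> k then (mproc f n \<omega> (Suc k), 0)
     else (fst (xy_of (fst (hist f n g \<omega> k))), Suc (snd (xy_of (fst (hist f n g \<omega> k))))))"
  by (cases "xy_of (fst (hist f n g \<omega> k))") (simp add: hist_Suc hist_step_def xy_of_def)

lemma mproc_eq_if_xy_of_hist:
  assumes "1 \<le> k" "xy_of (fst (hist f n g \<omega> k)) = (x, 0)"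
  shows "mproc f n \<omega> k = x"
  using assms by (cases k) (auto simp: xy_of_hist_Suc split: if_splits)

definition coins_after :: "'w outcome \<Rightarrow> nat \<Rightarrow> nat \<Rightarrow> bool" where
  "coins_after \<omega> k j = snd (snd \<omega>) (Suc k + j)"

lemma coins_after_upd_noise [simp]: "coins_after (upd_noise \<omega> k w) = coins_after \<omega>"
  by (simp add: coins_after_def upd_noise_def fun_eq_iff)

lemma coins_after_Suc: "coins_after \<omega> (Suc k) = (\<lambda>j. coins_after \<omega> k (Suc j))"
  by (simp add: coins_after_def fun_eq_iff)

definition blank_step_event :: "(nat \<Rightarrow> (real \<Rightarrow> real) option list \<Rightarrow> bool list \<Rightarrow> bool) \<Rightarrow> nat
    \<Rightarrow> ((real \<Rightarrow> real) option list \<times> bool list \<Rightarrow> (nat \<Rightarrow> bool) \<Rightarrow> bool)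
    \<Rightarrow> (real \<Rightarrow> real) option list \<times> bool list \<Rightarrow> (nat \<Rightarrow> bool) \<Rightarrow> bool" where
  "blank_step_event g k \<Phi> H c \<longleftrightarrow> \<not> (last (snd H) \<and> c 0) \<and> \<Phi> (hist_step g k H None) (\<lambda>j. c (Suc j))"

lemma blank_step_event_iff:
  assumes "k \<noteq> 0"
  shows "blank_step_event g k \<Phi> (hist f n g \<omega> k) (coins_after \<omega> k)
    \<longleftrightarrow> \<not> observed f n g \<omega> k \<and> \<Phi> (hist f n g \<omega> (Suc k)) (coins_after \<omega> (Suc k))"
  using assms by (auto simp: blank_step_event_def observed_def coins_after_Suc coins_after_def hist_Suc)

locale mean_field_model =
  fixes f :: "real \<Rightarrow> (real \<Rightarrow> real) \<Rightarrow> 'w::finite \<Rightarrow> real"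
    and n :: nat and S :: "real set"
    and P0 :: "(nat \<Rightarrow> real) pmf" and W :: "(nat \<Rightarrow> 'w) pmf" and q :: real
    and T :: "(real \<Rightarrow> real) \<Rightarrow> (real \<Rightarrow> real) \<Rightarrow> real"
  assumes n_pos: "n \<ge> 1"
    and S_fin: "finite S"
    and f_S: "\<forall>x\<in>S. \<forall>m\<in>Mset n S. \<forall>w. f x m w \<in> S"
    and P0_S: "\<forall>s\<in>set_pmf P0. \<forall>i<n. s i \<in> S"
    and exch: "\<forall>\<sigma>. \<sigma> permutes {..<n} \<longrightarrow> map_pmf (\<lambda>w. w \<circ> \<sigma>) W = W"
    and T_transition: "\<forall>\<tau>\<ge>1. \<forall>m m'.
        measure_pmf.prob (law P0 W q (Suc \<tau>)) {\<omega>. mproc f n \<omega> \<tau> = m} > 0 \<longrightarrow>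
        measure_pmf.prob (law P0 W q (Suc \<tau>)) {\<omega>. mproc f n \<omega> (Suc \<tau>) = m' \<and> mproc f n \<omega> \<tau> = m}
          / measure_pmf.prob (law P0 W q (Suc \<tau>)) {\<omega>. mproc f n \<omega> \<tau> = m} = T m' m"
begin

abbreviation "M \<equiv> Mset n S"

abbreviation Pr :: "nat \<Rightarrow> 'w outcome set \<Rightarrow> real" where
  "Pr N \<equiv> measure_pmf.prob (law P0 W q N)"

lemma finite_M: "finite M"
  using finite_Mset[OF S_fin] .

lemma st_in_S: "\<forall>i<n. fst \<omega> i \<in> S \<Longrightarrow> i < n \<Longrightarrow> st f n \<omega> k i \<in> S"
proof (induction k arbitrary: i)
  case (Suc k)
  then have "emp n (st f n \<omega> k) \<in> M"
    using emp_in_Mset[OF n_pos S_fin] by blast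
  with Suc show ?case
    using f_S by auto
qed simp

lemma mproc_in_M: "\<omega> \<in> set_pmf (law P0 W q N) \<Longrightarrow> mproc f n \<omega> k \<in> M"
  unfolding mproc_def using P0_S by (intro emp_in_Mset n_pos S_fin st_in_S) (auto simp: law_def)

lemma prob_mproc_Suc_eq_sum_emp_kernel:
  assumes "1 \<le> k" "k < N"
  shows "Pr N {\<omega>. mproc f n \<omega> (Suc k) = v} = (\<Sum>z\<in>M. emp_kernel f n W v z * Pr N {\<omega>. mproc f n \<omega> k = z})"
proof -
  have "Pr N {\<omega>. mproc f n \<omega> (Suc k) = v}
      = (\<Sum>z\<in>M. Pr N {\<omega>\<in>{\<omega>. mproc f n \<omega> (Suc k) = v}. mproc f n \<omega> k = z})"
    by (rule measure_pmf_prob_sum_fibres[OF finite_M mproc_in_M])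
  also have "\<dots> = (\<Sum>z\<in>M. emp_kernel f n W v z * Pr N {\<omega>. mproc f n \<omega> k = z})"
  proof (intro sum.cong refl)
    fix z
    have "Pr N {\<omega>. mproc f n \<omega> (Suc k) = v \<and> \<omega> \<in> {\<omega>. mproc f n \<omega> k = z}}
        = emp_kernel f n W v z * Pr N {\<omega>. mproc f n \<omega> k = z}"
      using assms by (intro prob_mproc_Suc_inter_eq_emp_kernel n_pos exch) (auto simp: mproc_upd_noise)
    then show "Pr N {\<omega>\<in>{\<omega>. mproc f n \<omega> (Suc k) = v}. mproc f n \<omega> k = z}
        = emp_kernel f n W v z * Pr N {\<omega>. mproc f n \<omega> k = z}"
      by simp
  qed
  finally show ?thesis .
qed

lemma prob_mproc_horizon_indep:
  assumes "1 \<le> k" "k \<le> N" "k \<le> N'"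
  shows "Pr N {\<omega>. mproc f n \<omega> k = z} = Pr N' {\<omega>. mproc f n \<omega> k = z}"
  using assms
proof (induction k arbitrary: z rule: nat_induct_at_least)
  case base
  have "Pr K {\<omega>. mproc f n \<omega> 1 = z} = measure_pmf.prob (map_pmf fst (law P0 W q K)) {s. emp n s = z}"
    for K
    by (simp add: mproc_def vimage_def)
  then show ?case
    by (simp add: law_def map_fst_pair_pmf)
next
  case (Suc k)
  then show ?case
    by (simp add: prob_mproc_Suc_eq_sum_emp_kernel)
qed

lemma T_eq_emp_kernel:
  assumes "1 \<le> k" "k < N" "Pr N {\<omega>. mproc f n \<omega> k = z} > 0"
  shows "T v z = emp_kernel f n W v z"
proof -
  have pos: "Pr (Suc k) {\<omega>. mproc f n \<omega> k = z} > 0"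
    using assms prob_mproc_horizon_indep[of k N "Suc k" z] by simp
  have "Pr (Suc k) {\<omega>. mproc f n \<omega> (Suc k) = v \<and> \<omega> \<in> {\<omega>. mproc f n \<omega> k = z}}
      = emp_kernel f n W v z * Pr (Suc k) {\<omega>. mproc f n \<omega> k = z}"
    using assms(1) by (intro prob_mproc_Suc_inter_eq_emp_kernel n_pos exch) (auto simp: mproc_upd_noise)
  with pos have "Pr (Suc k) {\<omega>. mproc f n \<omega> (Suc k) = v \<and> mproc f n \<omega> k = z}
      / Pr (Suc k) {\<omega>. mproc f n \<omega> k = z} = emp_kernel f n W v z"
    by simp
  moreover have "Pr (Suc k) {\<omega>. mproc f n \<omega> (Suc k) = v \<and> mproc f n \<omega> k = z}
      / Pr (Suc k) {\<omega>. mproc f n \<omega> k = z} = T v z"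
    using T_transition assms(1) pos by blast
  ultimately show ?thesis
    by simp
qed

lemma prob_mproc_Suc_inter:
  assumes "1 \<le> k" "k < N"
    and A_indep: "\<And>\<omega> w. upd_noise \<omega> k w \<in> A \<longleftrightarrow> \<omega> \<in> A"
    and A_mproc: "\<And>\<omega>. \<omega> \<in> A \<Longrightarrow> mproc f n \<omega> k = z"
  shows "Pr N {\<omega>. mproc f n \<omega> (Suc k) = v \<and> \<omega> \<in> A} = T v z * Pr N A"
proof (cases "Pr N {\<omega>. mproc f n \<omega> k = z} > 0")
  case True
  then show ?thesis
    using T_eq_emp_kernel[OF assms(1,2) True] prob_mproc_Suc_inter_eq_emp_kernel[OF n_pos exch assms]
    by simp
next
  case False
  then have "set_pmf (law P0 W q N) \<inter> {\<omega>. mproc f n \<omega> k = z} = {}"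
    by (simp add: zero_less_measure_iff measure_pmf_zero_iff)
  then have "set_pmf (law P0 W q N) \<inter> A = {}"
    using A_mproc by blast
  then have "Pr N A = 0" "Pr N {\<omega>. mproc f n \<omega> (Suc k) = v \<and> \<omega> \<in> A} = 0"
    by (auto simp: measure_pmf_zero_iff)
  then show ?thesis
    by simp
qed

lemma prob_mproc_Suc_inter_history_event:
  assumes "1 \<le> k" "k < N"
  shows "Pr N {\<omega>. mproc f n \<omega> (Suc k) = v \<and> \<Psi> (hist f n g \<omega> k) (coins_after \<omega> k)}
       = (\<Sum>z\<in>M. T v z * Pr N {\<omega>. mproc f n \<omega> k = z \<and> \<Psi> (hist f n g \<omega> k) (coins_after \<omega> k)})"
proof -
  let ?E = "{\<omega>. mproc f n \<omega> (Suc k) = v \<and> \<Psi> (hist f n g \<omega> k) (coins_after \<omega> k)}"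
  have "Pr N ?E = (\<Sum>z\<in>M. Pr N {\<omega>\<in>?E. mproc f n \<omega> k = z})"
    by (rule measure_pmf_prob_sum_fibres[OF finite_M mproc_in_M])
  also have "\<dots> = (\<Sum>z\<in>M. T v z * Pr N {\<omega>. mproc f n \<omega> k = z \<and> \<Psi> (hist f n g \<omega> k) (coins_after \<omega> k)})"
  proof (intro sum.cong refl)
    fix z
    have "Pr N {\<omega>. mproc f n \<omega> (Suc k) = v
          \<and> \<omega> \<in> {\<omega>. mproc f n \<omega> k = z \<and> \<Psi> (hist f n g \<omega> k) (coins_after \<omega> k)}}
        = T v z * Pr N {\<omega>. mproc f n \<omega> k = z \<and> \<Psi> (hist f n g \<omega> k) (coins_after \<omega> k)}"
      using assms by (intro prob_mproc_Suc_inter) (auto simp: mproc_upd_noise hist_upd_noise)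
    then show "Pr N {\<omega>\<in>?E. mproc f n \<omega> k = z}
        = T v z * Pr N {\<omega>. mproc f n \<omega> k = z \<and> \<Psi> (hist f n g \<omega> k) (coins_after \<omega> k)}"
      by (simp add: conj_commute conj_left_commute)
  qed
  finally show ?thesis .
qed

text \<open>Events of the form \<Phi> (hist k) (coins_after k) do not see w_k. Admitting the coins of the
  later observations makes this class of events closed under going back from time k + 1 to time k
  on a blank (blank_step_event), which is the induction step.\<close>
lemma prob_mproc_inter_history_event:
  assumes "1 \<le> k" "k < N"
    and xy: "\<And>\<omega>. \<Phi> (hist f n g \<omega> k) (coins_after \<omega> k) \<Longrightarrow> xy_of (fst (hist f n g \<omega> k)) = (x, y)"
  shows "Pr N {\<omega>. mproc f n \<omega> k = v \<and> \<Phi> (hist f n g \<omega> k) (coins_after \<omega> k)}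
       = tpow T M y v x * Pr N {\<omega>. \<Phi> (hist f n g \<omega> k) (coins_after \<omega> k)}"
  using assms
proof (induction y arbitrary: k \<Phi> v)
  case 0
  then have "mproc f n \<omega> k = x" if "\<Phi> (hist f n g \<omega> k) (coins_after \<omega> k)" for \<omega>
    using that mproc_eq_if_xy_of_hist by blast
  then have "{\<omega>. mproc f n \<omega> k = v \<and> \<Phi> (hist f n g \<omega> k) (coins_after \<omega> k)}
      = (if v = x then {\<omega>. \<Phi> (hist f n g \<omega> k) (coins_after \<omega> k)} else {})"
    by auto
  then show ?case
    by simp
next
  case (Suc y)
  then obtain k' where k: "k = Suc k'"
    by (cases k) auto
  have xy_Suc: "xy_of (fst (hist f n g \<omega> (Suc k'))) = (x, Suc y)"
    if "\<Phi> (hist f n g \<omega> (Suc k')) (coins_after \<omega> (Suc k'))" for \<omega>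
    using Suc.prems(3) that unfolding k .
  have unobserved: "\<not> observed f n g \<omega> k'"
    if "\<Phi> (hist f n g \<omega> (Suc k')) (coins_after \<omega> (Suc k'))" for \<omega>
    using xy_Suc[OF that] by (auto simp: xy_of_hist_Suc)
  show ?case
  proof (cases "k' = 0")
    case True
    then have "\<not> \<Phi> (hist f n g \<omega> (Suc k')) (coins_after \<omega> (Suc k'))" for \<omega>
      using unobserved[of \<omega>] True by (auto simp: observed_def)
    then show ?thesis
      unfolding k by simp
  next
    case False
    let ?\<Psi> = "blank_step_event g k' \<Phi>"
    have \<Phi>_\<Psi>: "\<Phi> (hist f n g \<omega> (Suc k')) (coins_after \<omega> (Suc k'))
        \<longleftrightarrow> ?\<Psi> (hist f n g \<omega> k') (coins_after \<omega> k')" for \<omega>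
      using unobserved blank_step_event_iff[OF False] by blast
    have xy': "xy_of (fst (hist f n g \<omega> k')) = (x, y)"
      if "?\<Psi> (hist f n g \<omega> k') (coins_after \<omega> k')" for \<omega>
      using that xy_Suc[of \<omega>] by (auto simp: blank_step_event_iff[OF False] xy_of_hist_Suc)
    have "Pr N {\<omega>. mproc f n \<omega> (Suc k') = v \<and> \<Phi> (hist f n g \<omega> (Suc k')) (coins_after \<omega> (Suc k'))}
        = Pr N {\<omega>. mproc f n \<omega> (Suc k') = v \<and> ?\<Psi> (hist f n g \<omega> k') (coins_after \<omega> k')}"
      by (simp only: \<Phi>_\<Psi>)
    also have "\<dots> = (\<Sum>z\<in>M. T v z
        * Pr N {\<omega>. mproc f n \<omega> k' = z \<and> ?\<Psi> (hist f n g \<omega> k') (coins_after \<omega> k')})"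
      using Suc.prems(2) False by (intro prob_mproc_Suc_inter_history_event) (auto simp: k)
    also have "\<dots> = (\<Sum>z\<in>M. T v z
        * (tpow T M y z x * Pr N {\<omega>. ?\<Psi> (hist f n g \<omega> k') (coins_after \<omega> k')}))"
      using Suc.IH[OF _ _ xy'] Suc.prems(2) False by (simp add: k)
    also have "\<dots> = tpow T M (Suc y) v x * Pr N {\<omega>. ?\<Psi> (hist f n g \<omega> k') (coins_after \<omega> k')}"
      by (simp add: sum_distrib_right mult.assoc)
    also have "Pr N {\<omega>. ?\<Psi> (hist f n g \<omega> k') (coins_after \<omega> k')}
        = Pr N {\<omega>. \<Phi> (hist f n g \<omega> (Suc k')) (coins_after \<omega> (Suc k'))}"
      by (simp only: \<Phi>_\<Psi>)
    finally show ?thesis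
      unfolding k .
  qed
qed

lemma mhat_eq_tpow:
  assumes "1 \<le> t" "\<omega> \<in> set_pmf (law P0 W q (Suc t))" "xy_of (fst (hist f n g \<omega> t)) = (x, y)"
  shows "mhat (law P0 W q (Suc t)) f n g h \<omega> t = h (\<lambda>v. tpow T M y v x)"
proof -
  define \<Phi> where "\<Phi> H (c :: nat \<Rightarrow> bool) \<longleftrightarrow>
    (fst H, butlast (snd H)) = (fst (hist f n g \<omega> t), butlast (snd (hist f n g \<omega> t)))" for H c
  have "Pr (Suc t) {\<omega>'. \<Phi> (hist f n g \<omega>' t) (coins_after \<omega>' t)} > 0"
    using assms(2) by (intro measure_pmf_posI) (auto simp: \<Phi>_def)
  moreover have "Pr (Suc t) {\<omega>'. mproc f n \<omega>' t = v \<and> \<Phi> (hist f n g \<omega>' t) (coins_after \<omega>' t)}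
      = tpow T M y v x * Pr (Suc t) {\<omega>'. \<Phi> (hist f n g \<omega>' t) (coins_after \<omega>' t)}" for v
    using assms by (intro prob_mproc_inter_history_event) (auto simp: \<Phi>_def)
  ultimately have "cprob (law P0 W q (Suc t)) (\<lambda>\<omega>'. mproc f n \<omega>' t)
      (\<lambda>\<omega>'. (fst (hist f n g \<omega>' t), butlast (snd (hist f n g \<omega>' t)))) \<omega> = (\<lambda>v. tpow T M y v x)"
    by (simp add: cprob_def \<Phi>_def fun_eq_iff)
  then show ?thesis
    by (simp add: mhat_def)
qed

lemma expected_cost_given_history_event:
  assumes "1 \<le> t"
    and pos: "Pr (Suc t) {\<omega>. \<Phi> (hist f n g \<omega> t) (coins_after \<omega> t)} > 0"
    and xya: "\<And>\<omega>. \<Phi> (hist f n g \<omega> t) (coins_after \<omega> t) \<Longrightarrow>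
      xy_of (fst (hist f n g \<omega> t)) = (x, y) \<and> last (snd (hist f n g \<omega> t)) = a"
  shows "measure_pmf.expectation (cond_pmf (law P0 W q (Suc t)) {\<omega>. \<Phi> (hist f n g \<omega> t) (coins_after \<omega> t)})
      (\<lambda>\<omega>. c (mproc f n \<omega> t) (mhat (law P0 W q (Suc t)) f n g h \<omega> t) (last (snd (hist f n g \<omega> t))))
    = chat c h T M x y a"
proof -
  define E where "E = {\<omega>. \<Phi> (hist f n g \<omega> t) (coins_after \<omega> t)}"
  have E_pos: "Pr (Suc t) E > 0"
    using pos by (simp add: E_def)
  then have E_ne: "set_pmf (law P0 W q (Suc t)) \<inter> E \<noteq> {}"
    by (simp flip: measure_pmf_zero_iff)
  have cond_law: "Pr (Suc t) {\<omega>\<in>E. mproc f n \<omega> t = m} = tpow T M y m x * Pr (Suc t) E" for m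
    unfolding E_def using assms(1) xya by (simp add: conj_commute prob_mproc_inter_history_event)
  have "measure_pmf.expectation (cond_pmf (law P0 W q (Suc t)) E)
      (\<lambda>\<omega>. c (mproc f n \<omega> t) (mhat (law P0 W q (Suc t)) f n g h \<omega> t) (last (snd (hist f n g \<omega> t))))
    = measure_pmf.expectation (cond_pmf (law P0 W q (Suc t)) E)
      (\<lambda>\<omega>. c (mproc f n \<omega> t) (h (\<lambda>v. tpow T M y v x)) a)"
    using E_ne assms(1) xya by (intro integral_cong_AE) (auto simp: AE_measure_pmf_iff E_def mhat_eq_tpow)
  also have "\<dots> = (\<Sum>m\<in>M. c m (h (\<lambda>v. tpow T M y v x)) a
      * (Pr (Suc t) {\<omega>\<in>E. mproc f n \<omega> t = m} / Pr (Suc t) E))"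
    by (rule expectation_cond_pmf_finite_range[OF finite_M mproc_in_M E_ne])
  also have "\<dots> = chat c h T M x y a"
    using E_pos by (simp add: chat_def cond_law)
  finally show ?thesis
    unfolding E_def .
qed

end

theorem lemma3:
  fixes n :: nat and S :: "real set"
    and f :: "real \<Rightarrow> (real \<Rightarrow> real) \<Rightarrow> 'w::finite \<Rightarrow> real"
    and P0 :: "(nat \<Rightarrow> real) pmf" and W :: "(nat \<Rightarrow> 'w) pmf" and q :: real
    and g :: "nat \<Rightarrow> (real \<Rightarrow> real) option list \<Rightarrow> bool list \<Rightarrow> bool"
    and h :: "((real \<Rightarrow> real) \<Rightarrow> real) \<Rightarrow> (real \<Rightarrow> real)"
    and c :: "(real \<Rightarrow> real) \<Rightarrow> (real \<Rightarrow> real) \<Rightarrow> bool \<Rightarrow> real"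
    and T :: "(real \<Rightarrow> real) \<Rightarrow> (real \<Rightarrow> real) \<Rightarrow> real"
    and t :: nat and X :: "(real \<Rightarrow> real) list" and Y :: "nat list" and A :: "bool list"
  assumes n_pos: "n \<ge> 1"
    and S_fin: "finite S"
    and f_S: "\<forall>x\<in>S. \<forall>m\<in>Mset n S. \<forall>w. f x m w \<in> S"
    and P0_S: "\<forall>s\<in>set_pmf P0. \<forall>i<n. s i \<in> S"
    and exch: "\<forall>\<sigma>. \<sigma> permutes {..<n} \<longrightarrow> map_pmf (\<lambda>w. w \<circ> \<sigma>) W = W"
    and q: "0 \<le> q" "q \<le> 1"
    and c_nonneg: "\<forall>m1\<in>Mset n S. \<forall>m2\<in>Mset n S. \<forall>a. c m1 m2 a \<ge> 0"
    and T_def: "\<forall>\<tau>\<ge>1. \<forall>m m'.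
        measure_pmf.prob (law P0 W q (Suc \<tau>)) {\<omega>. mproc f n \<omega> \<tau> = m} > 0 \<longrightarrow>
        measure_pmf.prob (law P0 W q (Suc \<tau>)) {\<omega>. mproc f n \<omega> (Suc \<tau>) = m' \<and> mproc f n \<omega> \<tau> = m}
          / measure_pmf.prob (law P0 W q (Suc \<tau>)) {\<omega>. mproc f n \<omega> \<tau> = m} = T m' m"
    and t_pos: "t \<ge> 1"
    and real: "measure_pmf.prob (law P0 W q (Suc t))
        {\<omega>. map fst (xyseq (fst (hist f n g \<omega> t))) = X \<and> map snd (xyseq (fst (hist f n g \<omega> t))) = Y
             \<and> snd (hist f n g \<omega> t) = A} > 0"
  shows "measure_pmf.expectation
           (cond_pmf (law P0 W q (Suc t))
              {\<omega>. map fst (xyseq (fst (hist f n g \<omega> t))) = X \<and> map snd (xyseq (fst (hist f n g \<omega> t))) = Y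
                   \<and> snd (hist f n g \<omega> t) = A})
           (\<lambda>\<omega>. c (mproc f n \<omega> t) (mhat (law P0 W q (Suc t)) f n g h \<omega> t) (last (snd (hist f n g \<omega> t))))
         = chat c h T (Mset n S) (last X) (last Y) (last A)"
proof -
  interpret mean_field_model f n S P0 W q T
    using n_pos S_fin f_S P0_S exch T_def by unfold_locales
  have "xy_of (fst (hist f n g \<omega> t)) = (last X, last Y) \<and> last (snd (hist f n g \<omega> t)) = last A"
    if "map fst (xyseq (fst (hist f n g \<omega> t))) = X" "map snd (xyseq (fst (hist f n g \<omega> t))) = Y"
      "snd (hist f n g \<omega> t) = A" for \<omega>
    using that t_pos length_hist[of f n g \<omega> t] length_xyseq[of "fst (hist f n g \<omega> t)"]
    by (auto simp: last_map last_xyseq simp flip: length_greater_0_conv)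
  then show ?thesis
    using t_pos real
    by (intro expected_cost_given_history_event[where \<Phi>="\<lambda>H _. map fst (xyseq (fst H)) = X
      \<and> map snd (xyseq (fst H)) = Y \<and> snd H = A"]) auto
qed

end
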